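(* Let $G$ be a 3-connected graph and let $\sigma$ be a star of oriented 3-separations of $G$ whose bag $X$ has exactly four vertices. Then the following are equivalent: (i) $\sigma\subseteq\tau$ for some 4-tangle $\tau$ in $G$; (ii) $X$ is cubic in $G$; (iii) $X$ is cubic in $G$, and for every standard cube-minor $\varphi\colon G\succcurlyeq Q$ at $X$, the $\varphi$-lift to $G$ of the unique 4-tangle of the cube $Q$ contains $\sigma$.
   Context: All graphs are finite and simple. A separation of $G$ is an unordered pair $\{A,B\}$ with $A\cup B=V(G)$ and no edge between $A\setminus B$ and $B\setminus A$; its order is $|A\cap B|$; a $k$-separation has order exactly $k$. For oriented separations, $(A,B)\le(C,D)$ means $A\subseteq C$ and $B\supseteq D$. A star is a set $\sigma$ of oriented separations such that $(A,B)\le(D,C)$ for all distinct $(A,B),(C,D)\in\sigma$; its bag is $\bigcap_{(A,B)\in\sigma}B$ (equal to $V(G)$ if $\sigma=\emptyset$). A $k$-tangle in $G$ is a set $\tau$ of oriented separations of order $<k$ containing exactly one orientation of each separation of order $<k$, with no $(A_i,B_i)\in\tau$ ($i=1,2,3$) satisfying $G[A_1]\cup G[A_2]\cup G[A_3]=G$. A minor-map $\varphi\colon G\succcurlyeq H$ is a pair $(U,f)$, $U\subseteq V(G)$, $f\colon U\to V(H)$ surjective, whose fibres (branch sets) $\varphi^{-1}(x)$ induce connected subgraphs and such that every edge $xy$ of $H$ is witnessed by an edge of $G$ between $\varphi^{-1}(x)$ and $\varphi^{-1}(y)$. For an oriented separation $(A,B)$ of $G$, $\varphi(A,B)=(A_\varphi,B_\varphi)$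 where $A_\varphi$ (resp. $B_\varphi$) is the set of vertices of $H$ whose branch set meets $A$ (resp. $B$). The $\varphi$-lift to $G$ of a $k$-tangle $\tau_H$ of $H$ is the set of oriented separations $s$ of $G$ of order $<k$ with $\varphi(s)\in\tau_H$. The cube $Q$ is the graph of the 3-dimensional cube; it is bipartite with classes $A_Q,B_Q$ of size four, and each $a\in A_Q$ is non-adjacent to exactly one $b\in B_Q$. The cube has exactly one 4-tangle. A set $X$ of four vertices of $G$ is cubic in $G$ if the set of neighbourhoods of the components of $G-X$ equals the set of all 3-element subsets of $X$. A standard cube-minor at a cubic set $X$ is a minor-map $\varphi\colon G\succcurlyeq Q$ for which there is a bijection $b\mapsto x_b$ from $B_Q$ to $X$ with $\varphi^{-1}(b)=\{x_b\}$ for $b\in B_Q$, and for each $a\in A_Q$ the branch set $\varphi^{-1}(a)$ is the vertex set of a component of $G-X$ whose neighbourhood is $X\setminus\{x_b\}$, where $b$ is the unique vertex of $B_Q$ not adjacent to $a$. *)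

theory Defs
  imports Main
begin

definition graph :: "'a set \<Rightarrow> ('a \<Rightarrow> 'a \<Rightarrow> bool) \<Rightarrow> bool" where
  "graph V E \<longleftrightarrow> finite V \<and> (\<forall>u v. E u v \<longrightarrow> u \<in> V \<and> v \<in> V)
     \<and> (\<forall>u v. E u v \<longrightarrow> E v u) \<and> (\<forall>u. \<not> E u u)"

definition connected_in :: "('a \<Rightarrow> 'a \<Rightarrow> bool) \<Rightarrow> 'a set \<Rightarrow> bool" where
  "connected_in E C \<longleftrightarrow> C \<noteq> {} \<and>
     (\<forall>u\<in>C. \<forall>v\<in>C. (\<lambda>x y. E x y \<and> x \<in> C \<and> y \<in> C)\<^sup>*\<^sup>* u v)"

definition k_connected :: "nat \<Rightarrow> 'a set \<Rightarrow> ('a \<Rightarrow> 'a \<Rightarrow> bool) \<Rightarrow> bool" where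
  "k_connected k V E \<longleftrightarrow> card V > k \<and>
     (\<forall>S. S \<subseteq> V \<and> card S < k \<longrightarrow> connected_in E (V - S))"

definition is_sep :: "'a set \<Rightarrow> ('a \<Rightarrow> 'a \<Rightarrow> bool) \<Rightarrow> 'a set \<Rightarrow> 'a set \<Rightarrow> bool" where
  "is_sep V E A B \<longleftrightarrow> A \<union> B = V \<and>
     (\<forall>u v. u \<in> A - B \<and> v \<in> B - A \<longrightarrow> \<not> E u v)"

definition sep_order :: "'a set \<times> 'a set \<Rightarrow> nat" where
  "sep_order s = card (fst s \<inter> snd s)"

definition osep_le :: "'a set \<times> 'a set \<Rightarrow> 'a set \<times> 'a set \<Rightarrow> bool" where
  "osep_le s t \<longleftrightarrow> fst s \<subseteq> fst t \<and> snd t \<subseteq> snd s"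

definition is_star :: "('a set \<times> 'a set) set \<Rightarrow> bool" where
  "is_star \<sigma> \<longleftrightarrow> (\<forall>A B C D. (A, B) \<in> \<sigma> \<and> (C, D) \<in> \<sigma> \<and> (A, B) \<noteq> (C, D)
       \<longrightarrow> osep_le (A, B) (D, C))"

definition bag :: "'a set \<Rightarrow> ('a set \<times> 'a set) set \<Rightarrow> 'a set" where
  "bag V \<sigma> = V \<inter> \<Inter> (snd ` \<sigma>)"

definition is_tangle :: "'a set \<Rightarrow> ('a \<Rightarrow> 'a \<Rightarrow> bool) \<Rightarrow> nat \<Rightarrow> ('a set \<times> 'a set) set \<Rightarrow> bool" where
  "is_tangle V E k \<tau> \<longleftrightarrow>
     (\<forall>s\<in>\<tau>. is_sep V E (fst s) (snd s) \<and> sep_order s < k) \<and>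
     (\<forall>A B. is_sep V E A B \<and> card (A \<inter> B) < k \<longrightarrow>
        ((A, B) \<in> \<tau> \<or> (B, A) \<in> \<tau>) \<and> ((A, B) \<in> \<tau> \<and> (B, A) \<in> \<tau> \<longrightarrow> A = B)) \<and>
     \<not> (\<exists>A1 B1 A2 B2 A3 B3. (A1, B1) \<in> \<tau> \<and> (A2, B2) \<in> \<tau> \<and> (A3, B3) \<in> \<tau> \<and>
          A1 \<union> A2 \<union> A3 = V \<and>
          (\<forall>u v. E u v \<longrightarrow> (u \<in> A1 \<and> v \<in> A1) \<or> (u \<in> A2 \<and> v \<in> A2) \<or> (u \<in> A3 \<and> v \<in> A3)))"

text \<open>Minor-map (U,f) : G \<succeq> H.  Branch set of x is {u \<in> U. f u = x}.\<close>
definition minor_map :: "'a set \<Rightarrow> ('a \<Rightarrow> 'a \<Rightarrow> bool) \<Rightarrow> 'b set \<Rightarrow> ('b \<Rightarrow> 'b \<Rightarrow> bool)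
    \<Rightarrow> 'a set \<Rightarrow> ('a \<Rightarrow> 'b) \<Rightarrow> bool" where
  "minor_map V E VH EH U f \<longleftrightarrow> U \<subseteq> V \<and> f ` U = VH \<and>
     (\<forall>x\<in>VH. connected_in E {u\<in>U. f u = x}) \<and>
     (\<forall>x y. EH x y \<longrightarrow> (\<exists>u v. u \<in> U \<and> v \<in> U \<and> f u = x \<and> f v = y \<and> E u v))"

text \<open>phi(A,B) = (A_phi, B_phi): vertices of H whose branch sets meet A, resp. B.\<close>
definition minor_image :: "'a set \<Rightarrow> ('a \<Rightarrow> 'b) \<Rightarrow> 'a set \<times> 'a set \<Rightarrow> 'b set \<times> 'b set" where
  "minor_image U f s = (f ` (U \<inter> fst s), f ` (U \<inter> snd s))"

definition lift :: "'a set \<Rightarrow> ('a \<Rightarrow> 'a \<Rightarrow> bool) \<Rightarrow> 'a set \<Rightarrow> ('a \<Rightarrow> 'b) \<Rightarrow> nat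
    \<Rightarrow> ('b set \<times> 'b set) set \<Rightarrow> ('a set \<times> 'a set) set" where
  "lift V E U f k \<tau>H = {s. is_sep V E (fst s) (snd s) \<and> sep_order s < k \<and> minor_image U f s \<in> \<tau>H}"

definition nbhd :: "'a set \<Rightarrow> ('a \<Rightarrow> 'a \<Rightarrow> bool) \<Rightarrow> 'a set \<Rightarrow> 'a set" where
  "nbhd V E C = {v \<in> V - C. \<exists>u\<in>C. E u v}"

definition is_component :: "'a set \<Rightarrow> ('a \<Rightarrow> 'a \<Rightarrow> bool) \<Rightarrow> 'a set \<Rightarrow> 'a set \<Rightarrow> bool" where
  "is_component V E X C \<longleftrightarrow> C \<subseteq> V - X \<and> connected_in E C \<and>
     (\<forall>D. C \<subseteq> D \<and> D \<subseteq> V - X \<and> connected_in E D \<longrightarrow> D = C)"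

definition cubic :: "'a set \<Rightarrow> ('a \<Rightarrow> 'a \<Rightarrow> bool) \<Rightarrow> 'a set \<Rightarrow> bool" where
  "cubic V E X \<longleftrightarrow> X \<subseteq> V \<and> card X = 4 \<and>
     {nbhd V E C | C. is_component V E X C} = {S. S \<subseteq> X \<and> card S = 3}"

type_synonym cube_vertex = "bool \<times> bool \<times> bool"

definition cube_V :: "cube_vertex set" where
  "cube_V = UNIV"

definition cube_E :: "cube_vertex \<Rightarrow> cube_vertex \<Rightarrow> bool" where
  "cube_E v w \<longleftrightarrow> (case v of (a, b, c) \<Rightarrow> case w of (a', b', c') \<Rightarrow>
      (a \<noteq> a' \<and> b = b' \<and> c = c') \<or> (a = a' \<and> b \<noteq> b' \<and> c = c') \<or> (a = a' \<and> b = b' \<and> c \<noteq> c'))"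

text \<open>Bipartition classes: A_Q = even number of True coordinates, B_Q = the rest.\<close>
definition cube_A :: "cube_vertex set" where
  "cube_A = {(False, False, False), (True, True, False), (True, False, True), (False, True, True)}"

definition cube_B :: "cube_vertex set" where
  "cube_B = cube_V - cube_A"

definition std_cube_minor :: "'a set \<Rightarrow> ('a \<Rightarrow> 'a \<Rightarrow> bool) \<Rightarrow> 'a set
    \<Rightarrow> 'a set \<Rightarrow> ('a \<Rightarrow> cube_vertex) \<Rightarrow> bool" where
  "std_cube_minor V E X U f \<longleftrightarrow> minor_map V E cube_V cube_E U f \<and>
     (\<exists>g. bij_betw g cube_B X \<and>
        (\<forall>b\<in>cube_B. {u\<in>U. f u = b} = {g b}) \<and>
        (\<forall>a\<in>cube_A. \<forall>b\<in>cube_B. \<not> cube_E a b \<longrightarrow>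
            is_component V E X {u\<in>U. f u = a} \<and> nbhd V E {u\<in>U. f u = a} = X - {g b}))"

end

theory Submission
  imports Defs
begin

text \<open>
  (i) \<Longrightarrow> (ii): every component of G - X lies in the strict small side of a separation of
  the star, so its neighbourhood lies in a 3-element separator, and 3-connectivity makes it
  exactly three vertices of X. If some X - {y} were not such a neighbourhood, then for the three
  other vertices z the separations (X - {z} \<union> D_z, V - D_z), where D_z collects the components
  attached to X - {z}, would lie in the tangle (they are joins of separations below ones in
  \<sigma>), yet their small sides cover G.

  (ii) \<Longrightarrow> (iii): under a standard cube-minor, a vertex of Q on the strict small side of
  the image of some (A, B) \<in> \<sigma> is a vertex a \<in> A_Q whose branch set is a component with
  neighbourhood X - {x_b}; hence A \<inter> B = X - {x_b}, so at most one vertex of Q lies on that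
  side, and the image lies in the unique 4-tangle of the cube, which consists of the
  separations of order at most 3 with at most one vertex on the strict small side.

  (iii) \<Longrightarrow> (i): a cubic set has a standard cube-minor, and lifting a tangle along a minor
  gives a tangle.
\<close>

section \<open>Connectivity\<close>

abbreviation induced :: "('a \<Rightarrow> 'a \<Rightarrow> bool) \<Rightarrow> 'a set \<Rightarrow> 'a \<Rightarrow> 'a \<Rightarrow> bool" where
  "induced E C \<equiv> \<lambda>x y. E x y \<and> x \<in> C \<and> y \<in> C"

lemma graph_symp: "graph V E \<Longrightarrow> symp E"
  unfolding graph_def symp_def by blast

lemma graph_edge_in: "graph V E \<Longrightarrow> E u v \<Longrightarrow> u \<in> V \<and> v \<in> V"
  unfolding graph_def by blast

lemma induced_rtranclp_mono: "(induced E C)\<^sup>*\<^sup>* x y \<Longrightarrow> C \<subseteq> D \<Longrightarrow> (induced E D)\<^sup>*\<^sup>* x y"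
  by (induction rule: rtranclp_induct) (auto intro: rtranclp.rtrancl_into_rtrancl)

lemma induced_rtranclp_sym: "symp E \<Longrightarrow> (induced E C)\<^sup>*\<^sup>* x y \<Longrightarrow> (induced E C)\<^sup>*\<^sup>* y x"
  by (rule sympD[OF symp_rtranclp]) (auto simp: symp_def)

lemma induced_rtranclp_closed:
  "(induced E C)\<^sup>*\<^sup>* x y \<Longrightarrow> x \<in> P \<Longrightarrow>
   (\<And>u w. u \<in> P \<Longrightarrow> u \<in> C \<Longrightarrow> w \<in> C \<Longrightarrow> E u w \<Longrightarrow> w \<in> P) \<Longrightarrow> y \<in> P"
  by (induction rule: rtranclp_induct) auto

lemma connected_in_singleton: "connected_in E {x}"
  unfolding connected_in_def by auto

lemma connected_in_Un:
  assumes "symp E" and "connected_in E C1" and "connected_in E C2" and "C1 \<inter> C2 \<noteq> {}"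
  shows "connected_in E (C1 \<union> C2)"
proof -
  obtain z where z: "z \<in> C1" "z \<in> C2" using assms(4) by auto
  have to_z: "(induced E (C1 \<union> C2))\<^sup>*\<^sup>* u z" if "u \<in> C1 \<union> C2" for u
  proof -
    have "(induced E C1)\<^sup>*\<^sup>* u z \<or> (induced E C2)\<^sup>*\<^sup>* u z"
      using that assms(2,3) z unfolding connected_in_def by blast
    then show ?thesis using induced_rtranclp_mono[of E _ u z "C1 \<union> C2"] by blast
  qed
  show ?thesis
    unfolding connected_in_def
  proof (intro conjI ballI)
    show "C1 \<union> C2 \<noteq> {}" using z by blast
    fix u v assume u: "u \<in> C1 \<union> C2" and v: "v \<in> C1 \<union> C2"
    show "(induced E (C1 \<union> C2))\<^sup>*\<^sup>* u v"
      using to_z[OF u] induced_rtranclp_sym[OF assms(1) to_z[OF v]] by (rule rtranclp_trans)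
  qed
qed

lemma connected_in_insert:
  assumes "symp E" and "connected_in E C" and "u \<in> C" and "E u w"
  shows "connected_in E (insert w C)"
proof -
  have "connected_in E {u, w}"
    using assms(4) sympD[OF assms(1,4)] unfolding connected_in_def by (auto intro: r_into_rtranclp)
  then have "connected_in E (C \<union> {u, w})"
    using connected_in_Un[OF assms(1,2)] assms(3) by blast
  moreover have "C \<union> {u, w} = insert w C" using assms(3) by auto
  ultimately show ?thesis by simp
qed

lemma connected_in_crossing_edge:
  assumes "connected_in E C" and "C \<subseteq> P \<union> R" and "P \<inter> R = {}"
    and "p \<in> C \<inter> P" and "r \<in> C \<inter> R"
  shows "\<exists>u\<in>P. \<exists>w\<in>R. E u w"
proof -
  have "(induced E C)\<^sup>*\<^sup>* p r" using assms(1,4,5) unfolding connected_in_def by blast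
  moreover have "r \<notin> P" using assms(3,5) by blast
  ultimately show ?thesis
    using induced_rtranclp_closed[of E C p r P] assms(2,4) by blast
qed

section \<open>Components and neighbourhoods\<close>

lemma component_exists:
  assumes "graph V E" and "v \<in> V - X"
  obtains C where "is_component V E X C" and "v \<in> C"
proof -
  define C where "C = {w. (induced E (V - X))\<^sup>*\<^sup>* v w}"
  have C_iff: "w \<in> C \<longleftrightarrow> (induced E (V - X))\<^sup>*\<^sup>* v w" for w by (simp add: C_def)
  have vC: "v \<in> C" by (simp add: C_iff)
  have C_sub: "C \<subseteq> V - X"
    using C_iff induced_rtranclp_closed[of E "V - X" v _ "V - X"] assms(2) by blast
  have walk_in_C: "(induced E C)\<^sup>*\<^sup>* v w" if "w \<in> C" for w
  proof -
    have "(induced E (V - X))\<^sup>*\<^sup>* v w" using that by (simp add: C_iff)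
    then show ?thesis
    proof (induction rule: rtranclp_induct)
      case (step y z)
      have "(induced E (V - X))\<^sup>*\<^sup>* v z"
        using step.hyps by (rule rtranclp.rtrancl_into_rtrancl)
      then have "induced E C y z" using step.hyps C_iff by blast
      with step.IH show ?case by (rule rtranclp.rtrancl_into_rtrancl)
    qed simp
  qed
  have "connected_in E C"
    unfolding connected_in_def
  proof (intro conjI ballI)
    show "C \<noteq> {}" using vC by blast
    fix a b assume "a \<in> C" "b \<in> C"
    then have "(induced E C)\<^sup>*\<^sup>* a v" "(induced E C)\<^sup>*\<^sup>* v b"
      using walk_in_C induced_rtranclp_sym[OF graph_symp[OF assms(1)]] by blast+
    then show "(induced E C)\<^sup>*\<^sup>* a b" by (rule rtranclp_trans)
  qed
  moreover have "D = C" if "C \<subseteq> D" "D \<subseteq> V - X" "connected_in E D" for D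
  proof -
    have "(induced E D)\<^sup>*\<^sup>* v d" if "d \<in> D" for d
      using \<open>connected_in E D\<close> \<open>C \<subseteq> D\<close> vC that unfolding connected_in_def by blast
    then have "D \<subseteq> C"
      using induced_rtranclp_mono[OF _ \<open>D \<subseteq> V - X\<close>] C_iff by blast
    then show "D = C" using \<open>C \<subseteq> D\<close> by blast
  qed
  ultimately have "is_component V E X C"
    using C_sub unfolding is_component_def by blast
  then show ?thesis using vC by (rule that)
qed

lemma component_maximal:
  "is_component V E X C \<Longrightarrow> C \<subseteq> D \<Longrightarrow> D \<subseteq> V - X \<Longrightarrow> connected_in E D \<Longrightarrow> D = C"
  unfolding is_component_def by blast

lemma component_closed:
  assumes "graph V E" and "is_component V E X C" and "u \<in> C" and "E u w" and "w \<notin> X"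
  shows "w \<in> C"
proof -
  have "connected_in E C" and "C \<subseteq> V - X" using assms(2) unfolding is_component_def by blast+
  then have "connected_in E (insert w C)" and "insert w C \<subseteq> V - X"
    using connected_in_insert[OF graph_symp[OF assms(1)] _ assms(3,4)]
      graph_edge_in[OF assms(1,4)] assms(5) by auto
  then have "insert w C = C" using component_maximal[OF assms(2) subset_insertI] by blast
  then show ?thesis by blast
qed

lemma components_eq:
  assumes "graph V E" and C1: "is_component V E X C1" and C2: "is_component V E X C2"
    and "C1 \<inter> C2 \<noteq> {}"
  shows "C1 = C2"
proof -
  have conn: "connected_in E (C1 \<union> C2)"
    using connected_in_Un[OF graph_symp[OF assms(1)] _ _ assms(4)] C1 C2
    unfolding is_component_def by blast
  have sub: "C1 \<union> C2 \<subseteq> V - X" using C1 C2 unfolding is_component_def by blast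
  have "C1 \<union> C2 = C1" by (rule component_maximal[OF C1 Un_upper1 sub conn])
  moreover have "C1 \<union> C2 = C2" by (rule component_maximal[OF C2 Un_upper2 sub conn])
  ultimately show ?thesis by simp
qed

lemma nbhd_component_subset:
  assumes "graph V E" and "is_component V E X C"
  shows "nbhd V E C \<subseteq> X"
  using component_closed[OF assms] unfolding nbhd_def by blast

lemma k_connected_nbhd_card:
  assumes "k_connected k V E" and "C \<subseteq> V" and "c \<in> C" and "x \<in> V - C - nbhd V E C"
  shows "k \<le> card (nbhd V E C)"
proof (rule ccontr)
  assume "\<not> k \<le> card (nbhd V E C)"
  moreover have "nbhd V E C \<subseteq> V" unfolding nbhd_def by auto
  ultimately have "connected_in E (V - nbhd V E C)"
    using assms(1) unfolding k_connected_def by simp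
  moreover have "c \<in> V - nbhd V E C" using assms(2,3) unfolding nbhd_def by auto
  ultimately have "\<exists>u\<in>C. \<exists>w\<in>V - nbhd V E C - C. E u w"
    by (intro connected_in_crossing_edge[where C = "V - nbhd V E C" and p = c and r = x])
      (use assms in auto)
  then show False unfolding nbhd_def by auto
qed

section \<open>Separations and tangles\<close>

lemma is_sep_swap: "symp E \<Longrightarrow> is_sep V E A B \<Longrightarrow> is_sep V E B A"
  unfolding is_sep_def by (blast dest: sympD)

lemma is_sepD:
  assumes "is_sep V E A B"
  shows "A \<union> B = V" and "u \<in> A - B \<Longrightarrow> v \<in> B - A \<Longrightarrow> \<not> E u v"
  using assms unfolding is_sep_def by blast+

lemma is_sep_Int_subset: "is_sep V E A B \<Longrightarrow> A \<inter> B \<subseteq> V"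
  unfolding is_sep_def by blast

lemma sep_edge_side:
  assumes "graph V E" and "is_sep V E A B" and "E u v"
  shows "(u \<in> A \<and> v \<in> A) \<or> (u \<in> B \<and> v \<in> B)"
proof -
  have "u \<in> A \<union> B" "v \<in> A \<union> B" "E v u"
    using assms(2) graph_edge_in[OF assms(1,3)] sympD[OF graph_symp[OF assms(1)] assms(3)]
    unfolding is_sep_def by auto
  then show ?thesis using assms(2,3) unfolding is_sep_def by blast
qed

lemma tangle_no_cover:
  assumes "is_tangle V E k \<tau>" "(A1, B1) \<in> \<tau>" "(A2, B2) \<in> \<tau>" "(A3, B3) \<in> \<tau>"
    "A1 \<union> A2 \<union> A3 = V"
    "\<And>u v. E u v \<Longrightarrow> (u \<in> A1 \<and> v \<in> A1) \<or> (u \<in> A2 \<and> v \<in> A2) \<or> (u \<in> A3 \<and> v \<in> A3)"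
  shows False
proof -
  have "\<not> (\<exists>A1 B1 A2 B2 A3 B3. (A1, B1) \<in> \<tau> \<and> (A2, B2) \<in> \<tau> \<and> (A3, B3) \<in> \<tau> \<and>
          A1 \<union> A2 \<union> A3 = V \<and>
          (\<forall>u v. E u v \<longrightarrow> (u \<in> A1 \<and> v \<in> A1) \<or> (u \<in> A2 \<and> v \<in> A2) \<or> (u \<in> A3 \<and> v \<in> A3)))"
    using assms(1) unfolding is_tangle_def by simp
  then show False using assms(2-6) by blast
qed

lemma tangle_orients:
  assumes "is_tangle V E k \<tau>" "is_sep V E A B" "card (A \<inter> B) < k"
  shows "(A, B) \<in> \<tau> \<or> (B, A) \<in> \<tau>"
  using assms unfolding is_tangle_def by blast

lemma tangle_memD:
  assumes "is_tangle V E k \<tau>" "(A, B) \<in> \<tau>"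
  shows "is_sep V E A B" "card (A \<inter> B) < k"
  using assms unfolding is_tangle_def sep_order_def by auto

lemma tangle_small_side_proper:
  assumes "graph V E" and "is_tangle V E k \<tau>" and "(A, B) \<in> \<tau>"
  shows "\<not> V \<subseteq> A"
proof
  assume "V \<subseteq> A"
  then have "A = V" using tangle_memD(1)[OF assms(2,3)] unfolding is_sep_def by auto
  then show False
    using tangle_no_cover[OF assms(2,3,3,3)] graph_edge_in[OF assms(1)] by blast
qed

lemma tangle_asym:
  assumes "graph V E" and t: "is_tangle V E k \<tau>" and "(A, B) \<in> \<tau>"
  shows "(B, A) \<notin> \<tau>"
proof
  assume BA: "(B, A) \<in> \<tau>"
  have AB: "is_sep V E A B" using tangle_memD(1)[OF t assms(3)] .
  show False
  proof (rule tangle_no_cover[OF t assms(3) BA BA])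
    show "A \<union> B \<union> B = V" using AB unfolding is_sep_def by blast
    show "(u \<in> A \<and> v \<in> A) \<or> (u \<in> B \<and> v \<in> B) \<or> (u \<in> B \<and> v \<in> B)" if "E u v" for u v
      using sep_edge_side[OF assms(1) AB that] by blast
  qed
qed

lemma tangle_join:
  assumes "graph V E" and t: "is_tangle V E k \<tau>"
    and "(A, B) \<in> \<tau>" and "(C, D) \<in> \<tau>" and "card ((A \<union> C) \<inter> (B \<inter> D)) < k"
  shows "(A \<union> C, B \<inter> D) \<in> \<tau>"
proof (rule ccontr)
  have AB: "is_sep V E A B" and CD: "is_sep V E C D"
    using tangle_memD(1)[OF t] assms(3,4) by blast+
  have sep: "is_sep V E (A \<union> C) (B \<inter> D)"
    using AB CD unfolding is_sep_def by blast
  assume "(A \<union> C, B \<inter> D) \<notin> \<tau>"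
  then have "(B \<inter> D, A \<union> C) \<in> \<tau>" using tangle_orients[OF t sep assms(5)] by blast
  moreover have "A \<union> C \<union> B \<inter> D = V" using sep unfolding is_sep_def by blast
  moreover have "(u \<in> A \<and> v \<in> A) \<or> (u \<in> C \<and> v \<in> C) \<or> (u \<in> B \<inter> D \<and> v \<in> B \<inter> D)"
    if "E u v" for u v
    using sep_edge_side[OF assms(1) AB that] sep_edge_side[OF assms(1) CD that] by blast
  ultimately show False using tangle_no_cover[OF t assms(3,4)] by blast
qed

lemma tangle_down_closed:
  assumes "graph V E" and t: "is_tangle V E k \<tau>" and "(A, B) \<in> \<tau>"
    and CD: "is_sep V E C D" and "card (C \<inter> D) < k" and "C \<subseteq> A"
  shows "(C, D) \<in> \<tau>"
proof (rule ccontr)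
  assume "(C, D) \<notin> \<tau>"
  then have DC: "(D, C) \<in> \<tau>" using tangle_orients[OF t CD assms(5)] by blast
  have "(u \<in> A \<and> v \<in> A) \<or> (u \<in> D \<and> v \<in> D)" if "E u v" for u v
    using sep_edge_side[OF assms(1) CD that] \<open>C \<subseteq> A\<close> by blast
  moreover have "A \<union> D = V"
    using CD \<open>C \<subseteq> A\<close> tangle_memD(1)[OF t assms(3)] unfolding is_sep_def by blast
  ultimately show False using tangle_no_cover[OF t assms(3) DC DC] by blast
qed

lemma tangle_contains_small:
  assumes "graph V E" and t: "is_tangle V E k \<tau>" and "S \<subseteq> V" and "card S < k"
  shows "(S, V) \<in> \<tau>"
proof -
  have "is_sep V E S V" using assms(3) unfolding is_sep_def by auto
  moreover have "card (S \<inter> V) < k" using assms(3,4) by (simp add: Int_absorb2)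
  ultimately have "(S, V) \<in> \<tau> \<or> (V, S) \<in> \<tau>" by (rule tangle_orients[OF t])
  moreover have "(V, S) \<notin> \<tau>" using tangle_small_side_proper[OF assms(1) t] by blast
  ultimately show ?thesis by blast
qed

lemma component_separation:
  assumes "is_component V E X C" and "nbhd V E C \<subseteq> T" and "T \<subseteq> V"
  shows "is_sep V E (T \<union> C) (V - C)"
  unfolding is_sep_def
proof (intro conjI allI impI notI)
  have "C \<subseteq> V" using assms(1) unfolding is_component_def by blast
  then show "T \<union> C \<union> (V - C) = V" using assms(3) by blast
  fix u v assume uv: "u \<in> T \<union> C - (V - C) \<and> v \<in> V - C - (T \<union> C)" and "E u v"
  then have "v \<in> nbhd V E C" using assms(3) unfolding nbhd_def by blast
  then show False using uv assms(2) by blast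
qed

lemma nbhd_subset_small_side:
  assumes "is_sep V E A B" and "C \<subseteq> A - B"
  shows "nbhd V E C \<subseteq> A"
  using assms unfolding is_sep_def nbhd_def by blast

definition attached :: "'a set \<Rightarrow> ('a \<Rightarrow> 'a \<Rightarrow> bool) \<Rightarrow> 'a set \<Rightarrow> 'a set \<Rightarrow> 'a set" where
  "attached V E X T = \<Union>{C. is_component V E X C \<and> nbhd V E C = T}"

lemma attached_subset: "attached V E X T \<subseteq> V - X"
  unfolding attached_def is_component_def by blast

lemma component_subset_attached: "is_component V E X C \<Longrightarrow> C \<subseteq> attached V E X (nbhd V E C)"
  unfolding attached_def by blast

lemma component_edge_attached:
  assumes "is_component V E X C" and "u \<in> C" and "E u v" and "v \<in> V"
  shows "v \<in> nbhd V E C \<union> attached V E X (nbhd V E C)"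
  using assms component_subset_attached unfolding nbhd_def by blast

section \<open>Stars of 3-separations with a four-vertex bag\<close>

locale star_of_3_separations =
  fixes V :: "'a set" and E :: "'a \<Rightarrow> 'a \<Rightarrow> bool" and \<sigma> :: "('a set \<times> 'a set) set"
  assumes graph: "graph V E"
    and sep3: "\<forall>s\<in>\<sigma>. is_sep V E (fst s) (snd s) \<and> sep_order s = 3"
    and star: "is_star \<sigma>"
begin

abbreviation X :: "'a set" where "X \<equiv> bag V \<sigma>"

lemma sigma_sep: "(A, B) \<in> \<sigma> \<Longrightarrow> is_sep V E A B"
  using sep3 by fastforce

lemma sigma_order: "(A, B) \<in> \<sigma> \<Longrightarrow> card (A \<inter> B) = 3"
  using sep3 unfolding sep_order_def by fastforce

lemma finite_V: "finite V"
  using graph unfolding graph_def by blast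

lemma bag_subset: "X \<subseteq> V"
  unfolding bag_def by blast

lemma bag_subset_big_side: "(A, B) \<in> \<sigma> \<Longrightarrow> X \<subseteq> B"
  unfolding bag_def by force

lemma outside_bag:
  assumes "v \<in> V - X"
  obtains A B where "(A, B) \<in> \<sigma>" and "v \<in> A - B"
proof -
  obtain A B where "(A, B) \<in> \<sigma>" "v \<notin> B" using assms unfolding bag_def by force
  moreover have "v \<in> A" using sigma_sep[OF \<open>(A, B) \<in> \<sigma>\<close>] assms \<open>v \<notin> B\<close>
    unfolding is_sep_def by blast
  ultimately show ?thesis using that by blast
qed

lemma star_small_sides_disjoint:
  "(A, B) \<in> \<sigma> \<Longrightarrow> (A', B') \<in> \<sigma> \<Longrightarrow> (A, B) \<noteq> (A', B') \<Longrightarrow> A \<subseteq> B'"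
  using star unfolding is_star_def osep_le_def by auto

text \<open>A component of G - X meets the strict small side of some separation
  of the star and cannot leave it, because the other strict small sides lie in the big side.\<close>
lemma component_in_small_side:
  assumes C: "is_component V E X C"
  obtains A B where "(A, B) \<in> \<sigma>" and "C \<subseteq> A - B" and "nbhd V E C \<subseteq> A \<inter> B"
proof -
  obtain c where c: "c \<in> C" using C unfolding is_component_def connected_in_def by blast
  have CV: "C \<subseteq> V - X" using C unfolding is_component_def by blast
  obtain A B where AB: "(A, B) \<in> \<sigma>" "c \<in> A - B" using outside_bag c CV by blast
  have "(induced E C)\<^sup>*\<^sup>* c w" if "w \<in> C" for w
    using C c that unfolding is_component_def connected_in_def by blast
  moreover have "w \<in> A - B" if "u \<in> A - B" "u \<in> C" "w \<in> C" "E u w" for u w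
  proof -
    have w: "w \<in> V - X" using CV that(3) by blast
    have "w \<in> A" using sep_edge_side[OF graph sigma_sep[OF AB(1)] that(4)] that(1) by blast
    moreover obtain A' B' where "(A', B') \<in> \<sigma>" "w \<in> A' - B'" using outside_bag[OF w] by blast
    ultimately show ?thesis using star_small_sides_disjoint[OF AB(1)] by blast
  qed
  ultimately have CAB: "C \<subseteq> A - B" using induced_rtranclp_closed[of E C c _ "A - B"] AB(2) by blast
  have "nbhd V E C \<subseteq> A" by (rule nbhd_subset_small_side[OF sigma_sep[OF AB(1)] CAB])
  moreover have "nbhd V E C \<subseteq> B"
    using nbhd_component_subset[OF graph C] bag_subset_big_side[OF AB(1)] by blast
  ultimately show ?thesis using that AB(1) CAB by blast
qed

lemma finite_sep_Int: "(A, B) \<in> \<sigma> \<Longrightarrow> finite (A \<inter> B)"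
  by (rule finite_subset[OF is_sep_Int_subset[OF sigma_sep] finite_V])

lemma finite_bag: "finite X"
  by (rule finite_subset[OF bag_subset finite_V])

text \<open>3-connectivity and a bag vertex outside N(C) give |N(C)| \<ge> 3, the order of the separation.\<close>
lemma component_separator:
  assumes "k_connected 3 V E" and "card X = 4" and C: "is_component V E X C"
  obtains A B where "(A, B) \<in> \<sigma>" and "C \<subseteq> A - B" and "A \<inter> B = nbhd V E C"
proof -
  obtain A B where AB: "(A, B) \<in> \<sigma>" "C \<subseteq> A - B" "nbhd V E C \<subseteq> A \<inter> B"
    using component_in_small_side[OF C] by blast
  have le3: "card (nbhd V E C) \<le> 3"
    using card_mono[OF finite_sep_Int[OF AB(1)] AB(3)] sigma_order[OF AB(1)] by simp
  have "\<not> X \<subseteq> nbhd V E C"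
  proof
    assume "X \<subseteq> nbhd V E C"
    moreover have "finite (nbhd V E C)" using finite_V unfolding nbhd_def by simp
    ultimately have "card X \<le> card (nbhd V E C)" by (rule card_mono[rotated])
    then show False using le3 assms(2) by simp
  qed
  then obtain x where "x \<in> X" "x \<notin> nbhd V E C" by blast
  moreover obtain c where "c \<in> C" using C unfolding is_component_def connected_in_def by blast
  moreover have "C \<subseteq> V - X" using C unfolding is_component_def by blast
  ultimately have "3 \<le> card (nbhd V E C)"
    using k_connected_nbhd_card[OF assms(1), of C c x] bag_subset by blast
  then have "A \<inter> B = nbhd V E C"
    using card_subset_eq[OF finite_sep_Int[OF AB(1)] AB(3)] le3 sigma_order[OF AB(1)] by simp
  then show ?thesis using that AB(1,2) by blast
qed

lemma card_nbhd_component: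
  assumes "k_connected 3 V E" and "card X = 4" and C: "is_component V E X C"
  shows "card (nbhd V E C) = 3"
proof -
  obtain A B where AB: "(A, B) \<in> \<sigma>" and sep: "A \<inter> B = nbhd V E C"
    by (rule component_separator[OF assms])
  from sigma_order[OF AB] show ?thesis unfolding sep .
qed


lemma tangle_contains_attached_side:
  assumes "k_connected 3 V E" and "card X = 4" and t: "is_tangle V E 4 \<tau>" and "\<sigma> \<subseteq> \<tau>"
    and T: "T \<subseteq> X" "card T = 3"
  shows "(T \<union> attached V E X T, V - attached V E X T) \<in> \<tau>"
proof -
  let ?K = "{C. is_component V E X C \<and> nbhd V E C = T}"
  have TV: "T \<subseteq> V" using T(1) bag_subset by blast
  have K_sub: "C \<subseteq> V - X" if "C \<in> ?K" for C using that unfolding is_component_def by blast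
  have "finite ?K"
    by (rule finite_subset[of _ "Pow V"]) (use K_sub finite_V in auto)
  moreover have "(T \<union> \<Union>K, V - \<Union>K) \<in> \<tau>" if "finite K" "K \<subseteq> ?K" for K
    using that
  proof (induction rule: finite_induct)
    case empty
    show ?case using tangle_contains_small[OF graph t TV] T(2) by simp
  next
    case (insert C K)
    then have IH: "(T \<union> \<Union>K, V - \<Union>K) \<in> \<tau>" and C: "is_component V E X C" "nbhd V E C = T"
      by auto
    obtain A B where AB: "(A, B) \<in> \<sigma>" "C \<subseteq> A - B" "A \<inter> B = T"
      using component_separator[OF assms(1,2) C(1)] C(2) by metis
    have sep: "is_sep V E (T \<union> C) (V - C)"
      by (rule component_separation[OF C(1)]) (use C(2) TV in auto)
    have CX: "C \<subseteq> V - X" and KX: "\<Union>K \<subseteq> V - X" using K_sub insert.prems by blast+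
    have "(T \<union> C) \<inter> (V - C) = T" using TV CX T(1) by blast
    then have "(T \<union> C, V - C) \<in> \<tau>"
      using tangle_down_closed[OF graph t _ sep, of A B] AB \<open>\<sigma> \<subseteq> \<tau>\<close> T(2) by auto
    moreover have "(T \<union> \<Union>K \<union> (T \<union> C)) \<inter> ((V - \<Union>K) \<inter> (V - C)) = T"
      using TV CX KX T(1) by blast
    ultimately have "(T \<union> \<Union>K \<union> (T \<union> C), (V - \<Union>K) \<inter> (V - C)) \<in> \<tau>"
      using tangle_join[OF graph t IH] T(2) by simp
    moreover have "T \<union> \<Union>K \<union> (T \<union> C) = T \<union> \<Union>(insert C K)"
      and "(V - \<Union>K) \<inter> (V - C) = V - \<Union>(insert C K)" by auto
    ultimately show ?case by simp
  qed
  ultimately show ?thesis unfolding attached_def by blast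
qed

lemma bag_minus_point:
  assumes "card X = 4" and "T \<subseteq> X" and "card T = 3"
  obtains z where "z \<in> X" and "T = X - {z}"
proof -
  have "card (X - T) = 1" using assms finite_bag by (simp add: card_Diff_subset finite_subset)
  then obtain z where z: "X - T = {z}" by (metis One_nat_def card_1_singleton_iff)
  then have "z \<in> X" and "T = X - {z}" using assms(2) by blast+
  then show ?thesis by (rule that)
qed

lemma nbhd_component_bag_minus_point:
  assumes "k_connected 3 V E" and "card X = 4" and C: "is_component V E X C"
  obtains z where "z \<in> X" and "nbhd V E C = X - {z}"
  by (rule bag_minus_point[OF assms(2) nbhd_component_subset[OF graph C]
        card_nbhd_component[OF assms]])

definition bag_side :: "'a \<Rightarrow> 'a set" where
  "bag_side z = X - {z} \<union> attached V E X (X - {z})"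

lemma bag_side_subset: "bag_side z \<subseteq> V"
  unfolding bag_side_def using attached_subset[of V E X "X - {z}"] bag_subset by blast

lemma bag_vertices_in_bag_side:
  assumes "card X = 4" and "y \<in> X" and "u \<in> X" and "v \<in> X"
  shows "\<exists>z\<in>X - {y}. u \<in> bag_side z \<and> v \<in> bag_side z"
proof -
  have "card {u, v, y} \<le> 3" by (simp add: card_insert_le_m1)
  then have "\<not> X \<subseteq> {u, v, y}" using card_mono[of "{u, v, y}" X] assms(1) by auto
  then obtain z where "z \<in> X" "z \<notin> {u, v, y}" by blast
  then show ?thesis using assms(3,4) unfolding bag_side_def by (intro bexI[of _ z]) auto
qed

lemma outside_vertex_in_bag_side:
  assumes "k_connected 3 V E" and "card X = 4"
    and no_y: "\<And>C. is_component V E X C \<Longrightarrow> nbhd V E C \<noteq> X - {y}" and "u \<in> V - X"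
  shows "\<exists>z\<in>X - {y}. u \<in> bag_side z \<and> (\<forall>v\<in>V. E u v \<longrightarrow> v \<in> bag_side z)"
proof -
  obtain C where C: "is_component V E X C" "u \<in> C" by (rule component_exists[OF graph assms(4)])
  obtain z where z: "z \<in> X" "nbhd V E C = X - {z}"
    by (rule nbhd_component_bag_minus_point[OF assms(1,2) C(1)])
  have "z \<noteq> y" using no_y[OF C(1)] unfolding z(2) by blast
  moreover have "u \<in> bag_side z"
    using component_subset_attached[OF C(1)] C(2) unfolding z(2) bag_side_def by blast
  moreover have "v \<in> bag_side z" if "v \<in> V" "E u v" for v
    using component_edge_attached[OF C(1,2) that(2,1)] unfolding z(2) bag_side_def by blast
  ultimately show ?thesis using z(1) by blast
qed

lemma edge_in_bag_side:
  assumes "k_connected 3 V E" and "card X = 4" and "y \<in> X"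
    and no_y: "\<And>C. is_component V E X C \<Longrightarrow> nbhd V E C \<noteq> X - {y}" and e: "E u v"
  shows "\<exists>z\<in>X - {y}. u \<in> bag_side z \<and> v \<in> bag_side z"
proof -
  have uv: "u \<in> V" "v \<in> V" "E v u"
    using graph_edge_in[OF graph e] sympD[OF graph_symp[OF graph] e] by auto
  consider "u \<in> X" "v \<in> X" | "u \<in> V - X" | "v \<in> V - X" using uv by blast
  then show ?thesis
  proof cases
    case 1
    then show ?thesis by (rule bag_vertices_in_bag_side[OF assms(2,3)])
  next
    case 2
    then show ?thesis using outside_vertex_in_bag_side[OF assms(1,2) no_y] uv e by blast
  next
    case 3
    then show ?thesis using outside_vertex_in_bag_side[OF assms(1,2) no_y] uv by blast
  qed
qed

text \<open>If X - {y} were not a neighbourhood, the three sides obtained from the other vertices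
  of X would cover G.\<close>
lemma tangle_bag_cubic:
  assumes kc: "k_connected 3 V E" and X4: "card X = 4" and t: "is_tangle V E 4 \<tau>" and "\<sigma> \<subseteq> \<tau>"
  shows "cubic V E X"
proof -
  have "\<exists>C. is_component V E X C \<and> nbhd V E C = S" if S: "S \<subseteq> X" "card S = 3" for S
  proof (rule ccontr)
    obtain y where y: "y \<in> X" "S = X - {y}" by (rule bag_minus_point[OF X4 S])
    assume "\<not> ?thesis"
    then have no_y: "\<And>C. is_component V E X C \<Longrightarrow> nbhd V E C \<noteq> X - {y}" using y(2) by blast
    have "card (X - {y}) = 3" using S(2) y(2) by simp
    then obtain s1 s2 s3 where S3: "X - {y} = {s1, s2, s3}"
      using card_3_iff by metis
    have in_tau: "(bag_side z, V - attached V E X (X - {z})) \<in> \<tau>" if "z \<in> X - {y}" for z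
    proof -
      have "card (X - {z}) = 3" using that X4 finite_bag by (simp add: card_Diff_singleton)
      then show ?thesis
        using tangle_contains_attached_side[OF kc X4 t \<open>\<sigma> \<subseteq> \<tau>\<close>] unfolding bag_side_def by blast
    qed
    have "\<exists>z\<in>X - {y}. v \<in> bag_side z" if "v \<in> V" for v
      using bag_vertices_in_bag_side[OF X4 y(1), of v v]
        outside_vertex_in_bag_side[OF kc X4 no_y, of v] that by blast
    then have "bag_side s1 \<union> bag_side s2 \<union> bag_side s3 = V"
      using bag_side_subset unfolding S3 by blast
    moreover have "(u \<in> bag_side s1 \<and> v \<in> bag_side s1) \<or> (u \<in> bag_side s2 \<and> v \<in> bag_side s2) \<or>
        (u \<in> bag_side s3 \<and> v \<in> bag_side s3)" if "E u v" for u v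
      using edge_in_bag_side[OF kc X4 y(1) no_y that] unfolding S3 by blast
    moreover have "s1 \<in> X - {y}" "s2 \<in> X - {y}" "s3 \<in> X - {y}" using S3 by auto
    ultimately show False
      using tangle_no_cover[OF t in_tau[of s1] in_tau[of s2] in_tau[of s3]] by blast
  qed
  moreover have "nbhd V E C \<subseteq> X \<and> card (nbhd V E C) = 3" if "is_component V E X C" for C
    using nbhd_component_subset[OF graph that] card_nbhd_component[OF kc X4 that] by blast
  ultimately have "{nbhd V E C | C. is_component V E X C} = {S. S \<subseteq> X \<and> card S = 3}"
    by blast
  then show ?thesis unfolding cubic_def using bag_subset X4 by blast
qed

end

section \<open>The cube and its 4-tangle\<close>

lemma cube_graph: "graph cube_V cube_E"
  unfolding graph_def cube_V_def cube_E_def by (auto split: prod.splits)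

lemma card_cube_V: "card cube_V = 8"
  unfolding cube_V_def by (simp flip: UNIV_Times_UNIV add: card_cartesian_product)

text \<open>Vertex expansion of the cube, verified by enumerating all 256 vertex sets.\<close>
lemma cube_expansion_enum:
  "\<forall>ps \<in> set (subseqs (enum_class.enum :: cube_vertex list)).
     2 \<le> card (set ps) \<longrightarrow>
     2 \<le> card (set (filter (\<lambda>w. w \<notin> set ps \<and> \<not> (\<exists>u\<in>set ps. cube_E u w)) enum_class.enum)) \<longrightarrow>
     4 \<le> card (set (filter (\<lambda>w. w \<notin> set ps \<and> (\<exists>u\<in>set ps. cube_E u w)) enum_class.enum))"
  by code_simp

lemma cube_expansion:
  assumes "2 \<le> card P" and "2 \<le> card (cube_V - P - nbhd cube_V cube_E P)"
  shows "4 \<le> card (nbhd cube_V cube_E P)"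
proof -
  have "P \<in> set (map set (subseqs (enum_class.enum :: cube_vertex list)))"
    by (simp add: subseqs_powset flip: UNIV_enum)
  then obtain ps where ps: "ps \<in> set (subseqs enum_class.enum)" "set ps = P" by auto
  have "set (filter (\<lambda>w. w \<notin> set ps \<and> \<not> (\<exists>u\<in>set ps. cube_E u w)) enum_class.enum)
      = cube_V - P - nbhd cube_V cube_E P"
    and "set (filter (\<lambda>w. w \<notin> set ps \<and> (\<exists>u\<in>set ps. cube_E u w)) enum_class.enum)
      = nbhd cube_V cube_E P"
    using ps(2) by (auto simp: cube_V_def nbhd_def simp flip: UNIV_enum)
  then show ?thesis using cube_expansion_enum ps assms by auto
qed

lemma cube_small_separations:
  assumes sep: "is_sep cube_V cube_E A B" and "card (A \<inter> B) < 4"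
  shows "card (A - B) \<le> 1 \<or> card (B - A) \<le> 1"
proof (rule ccontr)
  assume "\<not> ?thesis"
  moreover have "B - A \<subseteq> cube_V - (A - B) - nbhd cube_V cube_E (A - B)"
    using sep unfolding is_sep_def nbhd_def by blast
  ultimately have "4 \<le> card (nbhd cube_V cube_E (A - B))"
    using card_mono[of "cube_V - (A - B) - nbhd cube_V cube_E (A - B)" "B - A"]
    by (intro cube_expansion) (auto simp: cube_V_def)
  moreover have "nbhd cube_V cube_E (A - B) \<subseteq> A \<inter> B"
    using sep unfolding is_sep_def nbhd_def by blast
  ultimately show False
    using card_mono[of "A \<inter> B" "nbhd cube_V cube_E (A - B)"] assms(2) by (simp add: cube_V_def)
qed

definition cube_tangle :: "(cube_vertex set \<times> cube_vertex set) set" where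
  "cube_tangle = {(A, B). is_sep cube_V cube_E A B \<and> card (A \<inter> B) < 4 \<and> card (A - B) \<le> 1}"

lemma cube_vertex_outside_two_rungs:
  "\<forall>b c b' c' v. (b, c) \<noteq> (b', c') \<longrightarrow>
     v \<in> {(False, b, c), (True, b, c), (False, b', c'), (True, b', c')} \<longrightarrow>
     (\<exists>w. cube_E v w \<and> w \<notin> {(False, b, c), (True, b, c), (False, b', c'), (True, b', c')})"
  by (simp add: cube_E_def all_bool_eq ex_bool_eq split_paired_Ex split_paired_All)

text \<open>A small side of the cube tangle has at most four vertices, so containing two rungs
  (edges in the first coordinate direction) it would consist of them; but a vertex of
  its strict part has a neighbour outside them.\<close>
lemma cube_tangle_one_rung:
  assumes "(A, B) \<in> cube_tangle" and "(b, c) \<noteq> (b', c')"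
  shows "\<not> {(False, b, c), (True, b, c), (False, b', c'), (True, b', c')} \<subseteq> A"
proof
  let ?W = "{(False, b, c), (True, b, c), (False, b', c'), (True, b', c')}"
  assume WA: "?W \<subseteq> A"
  have sep: "is_sep cube_V cube_E A B" and ord: "card (A \<inter> B) < 4" and "card (A - B) \<le> 1"
    using assms(1) unfolding cube_tangle_def by auto
  then have "card A \<le> 4"
    using card_Un_le[of "A \<inter> B" "A - B"] by (simp add: Int_Diff_Un)
  moreover have W4: "card ?W = 4" using assms(2) by auto
  ultimately have AW: "A = ?W" using card_seteq[OF _ WA] by simp
  have "A - B \<noteq> {}"
  proof
    assume "A - B = {}"
    then have "A \<inter> B = A" by blast
    then show False using ord AW W4 by simp
  qed
  then obtain v where v: "v \<in> A" "v \<notin> B" by blast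
  have "v \<in> ?W" using v(1) AW by simp
  then obtain w where w: "cube_E v w" "w \<notin> ?W"
    using cube_vertex_outside_two_rungs[rule_format, OF assms(2)] by blast
  have "w \<in> A" using sep_edge_side[OF cube_graph sep w(1)] v(2) by blast
  then show False using w(2) AW by simp
qed

text \<open>Each of the four rungs lies in one of the three small sides, but each small side contains
  at most one rung.\<close>
lemma cube_tangle_no_cover:
  assumes sides: "(A1, B1) \<in> cube_tangle" "(A2, B2) \<in> cube_tangle" "(A3, B3) \<in> cube_tangle"
    and cover: "\<And>u v. cube_E u v \<Longrightarrow> u \<in> A1 \<and> v \<in> A1 \<or> u \<in> A2 \<and> v \<in> A2 \<or> u \<in> A3 \<and> v \<in> A3"
  shows False
proof -
  define rungs
    where "rungs (A :: cube_vertex set) = {(b, c). (False, b, c) \<in> A \<and> (True, b, c) \<in> A}" for A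
  have card_rungs: "card (rungs A) \<le> 1" if "(A, B) \<in> cube_tangle" for A B
  proof -
    have "x = y" if "x \<in> rungs A" "y \<in> rungs A" for x y
      using cube_tangle_one_rung[OF \<open>(A, B) \<in> cube_tangle\<close>, of "fst x" "snd x" "fst y" "snd y"] that
      unfolding rungs_def by auto
    then show ?thesis using card_le_Suc0_iff_eq[of "rungs A"] by simp
  qed
  have "p \<in> rungs A1 \<union> rungs A2 \<union> rungs A3" for p
  proof -
    obtain b c where p: "p = (b, c)" by (cases p)
    have "cube_E (False, b, c) (True, b, c)" by (simp add: cube_E_def)
    then show ?thesis using cover unfolding p rungs_def by blast
  qed
  then have "rungs A1 \<union> rungs A2 \<union> rungs A3 = UNIV" by blast
  then have "card (UNIV :: (bool \<times> bool) set) \<le> 3"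
    using card_rungs[OF sides(1)] card_rungs[OF sides(2)] card_rungs[OF sides(3)]
      card_Un_le[of "rungs A1 \<union> rungs A2" "rungs A3"] card_Un_le[of "rungs A1" "rungs A2"]
    by simp
  then show False by (simp flip: UNIV_Times_UNIV add: card_cartesian_product)
qed

lemma cube_tangle_is_tangle: "is_tangle cube_V cube_E 4 cube_tangle"
  unfolding is_tangle_def
proof (intro conjI allI impI notI)
  show "\<forall>s\<in>cube_tangle. is_sep cube_V cube_E (fst s) (snd s) \<and> sep_order s < 4"
    unfolding cube_tangle_def sep_order_def by auto
next
  fix A B assume AB: "is_sep cube_V cube_E A B \<and> card (A \<inter> B) < 4"
  then have "is_sep cube_V cube_E B A" "card (B \<inter> A) < 4"
    using is_sep_swap[OF graph_symp[OF cube_graph]] by (auto simp: Int_commute)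
  then show "(A, B) \<in> cube_tangle \<or> (B, A) \<in> cube_tangle"
    using cube_small_separations AB unfolding cube_tangle_def by auto
  assume "(A, B) \<in> cube_tangle \<and> (B, A) \<in> cube_tangle"
  then have "card (A - B) + card (B - A) + card (A \<inter> B) < card cube_V"
    unfolding cube_tangle_def card_cube_V by auto
  moreover have "cube_V = (A - B) \<union> (B - A) \<union> (A \<inter> B)" using AB unfolding is_sep_def by blast
  ultimately show "A = B"
    using card_Un_le[of "A - B" "B - A"] card_Un_le[of "(A - B) \<union> (B - A)" "A \<inter> B"] by simp
next
  assume "\<exists>A1 B1 A2 B2 A3 B3. (A1, B1) \<in> cube_tangle \<and> (A2, B2) \<in> cube_tangle \<and>
    (A3, B3) \<in> cube_tangle \<and> A1 \<union> A2 \<union> A3 = cube_V \<and>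
    (\<forall>u v. cube_E u v \<longrightarrow> u \<in> A1 \<and> v \<in> A1 \<or> u \<in> A2 \<and> v \<in> A2 \<or> u \<in> A3 \<and> v \<in> A3)"
  then obtain A1 B1 A2 B2 A3 B3
    where "(A1, B1) \<in> cube_tangle" "(A2, B2) \<in> cube_tangle" "(A3, B3) \<in> cube_tangle"
    and "\<And>u v. cube_E u v \<Longrightarrow> u \<in> A1 \<and> v \<in> A1 \<or> u \<in> A2 \<and> v \<in> A2 \<or> u \<in> A3 \<and> v \<in> A3"
    by blast
  then show False by (rule cube_tangle_no_cover)
qed

text \<open>If D - C = {v}, then C contains every other vertex, and together with the small
  separations ({v, x1, x2}, V) and ({v, x3}, V) the side C covers G.\<close>
lemma subcubic_tangle4_big_side:
  assumes g: "graph V E" and t: "is_tangle V E 4 \<tau>" and CD: "(C, D) \<in> \<tau>"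
    and deg: "\<And>v. v \<in> V \<Longrightarrow>
      \<exists>x1 x2 x3. {x1, x2, x3} \<subseteq> V \<and> (\<forall>w. E v w \<longrightarrow> w \<in> {x1, x2, x3})"
  shows "2 \<le> card (D - C)"
proof (rule ccontr)
  have CDV: "C \<union> D = V" using tangle_memD(1)[OF t CD] unfolding is_sep_def by blast
  have "finite (D - C)" by (rule finite_subset[of _ V]) (use CDV g in \<open>auto simp: graph_def\<close>)
  moreover assume "\<not> 2 \<le> card (D - C)"
  ultimately have "D - C = {} \<or> (\<exists>v. D - C = {v})"
    using card_1_singleton_iff[of "D - C"] by (cases "card (D - C)") auto
  then show False
  proof
    assume "D - C = {}"
    then show False using tangle_small_side_proper[OF g t CD] CDV by blast
  next
    assume "\<exists>v. D - C = {v}"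
    then obtain v where v: "D - C = {v}" by blast
    then have "v \<in> V" using CDV by blast
    then obtain x1 x2 x3 where x: "{x1, x2, x3} \<subseteq> V" "\<And>w. E v w \<Longrightarrow> w \<in> {x1, x2, x3}"
      using deg by blast
    have small1: "({v, x1, x2}, V) \<in> \<tau>"
      by (rule tangle_contains_small[OF g t]) (use x(1) \<open>v \<in> V\<close> in \<open>auto simp: card_insert_if\<close>)
    have small2: "({v, x3}, V) \<in> \<tau>"
      by (rule tangle_contains_small[OF g t]) (use x(1) \<open>v \<in> V\<close> in \<open>auto simp: card_insert_if\<close>)
    have rest: "V - {v} \<subseteq> C" using v CDV by blast
    show False
    proof (rule tangle_no_cover[OF t CD small1 small2])
      show "C \<union> {v, x1, x2} \<union> {v, x3} = V" using rest x(1) \<open>v \<in> V\<close> CDV by blast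
      fix u w assume e: "E u w"
      have uw: "u \<in> V" "w \<in> V" "E w u"
        using graph_edge_in[OF g e] sympD[OF graph_symp[OF g] e] by auto
      show "(u \<in> C \<and> w \<in> C) \<or> (u \<in> {v, x1, x2} \<and> w \<in> {v, x1, x2}) \<or> (u \<in> {v, x3} \<and> w \<in> {v, x3})"
      proof (cases "u = v \<or> w = v")
        case True
        then have "(u = v \<and> w \<in> {x1, x2, x3}) \<or> (w = v \<and> u \<in> {x1, x2, x3})"
          using x(2) e uw(3) by blast
        then show ?thesis by blast
      next
        case False
        then show ?thesis using rest uw(1,2) by blast
      qed
    qed
  qed
qed

lemma cube_tangle_unique:
  assumes t: "is_tangle cube_V cube_E 4 \<tau>"
  shows "\<tau> = cube_tangle"
proof -
  have big: "2 \<le> card (D - C)" if "(C, D) \<in> \<tau>" for C D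
  proof (rule subcubic_tangle4_big_side[OF cube_graph t that])
    fix v :: cube_vertex
    obtain a b c where "v = (a, b, c)" by (cases v)
    then have "\<forall>w. cube_E v w \<longrightarrow> w \<in> {(\<not> a, b, c), (a, \<not> b, c), (a, b, \<not> c)}"
      by (auto simp: cube_E_def)
    then show "\<exists>x1 x2 x3. {x1, x2, x3} \<subseteq> cube_V \<and> (\<forall>w. cube_E v w \<longrightarrow> w \<in> {x1, x2, x3})"
      unfolding cube_V_def by blast
  qed
  show ?thesis
  proof (intro set_eqI)
    fix s :: "cube_vertex set \<times> cube_vertex set"
    obtain A B where s: "s = (A, B)" by (cases s)
    show "s \<in> \<tau> \<longleftrightarrow> s \<in> cube_tangle"
    proof
      assume AB: "s \<in> \<tau>"
      have "is_sep cube_V cube_E A B" "card (A \<inter> B) < 4"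
        using tangle_memD[OF t AB[unfolded s]] by blast+
      moreover have "2 \<le> card (B - A)" using big AB s by blast
      ultimately show "s \<in> cube_tangle"
        using cube_small_separations unfolding s cube_tangle_def by force
    next
      assume "s \<in> cube_tangle"
      then have sep: "is_sep cube_V cube_E A B" "card (A \<inter> B) < 4" "card (A - B) \<le> 1"
        unfolding s cube_tangle_def by auto
      then have "(A, B) \<in> \<tau> \<or> (B, A) \<in> \<tau>" using tangle_orients[OF t] by blast
      then show "s \<in> \<tau>" using big[of B A] sep(3) s by auto
    qed
  qed
qed

lemma The_cube_tangle: "(THE \<tau>. is_tangle cube_V cube_E 4 \<tau>) = cube_tangle"
  by (rule the_equality[where P = "\<lambda>\<tau>. is_tangle cube_V cube_E 4 \<tau>",
        OF cube_tangle_is_tangle cube_tangle_unique])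

section \<open>Lifting tangles along minors\<close>

lemma minor_mapD:
  assumes "minor_map V E VH EH U f"
  shows "U \<subseteq> V" and "f ` U = VH" and "x \<in> VH \<Longrightarrow> connected_in E {u \<in> U. f u = x}"
    and "EH x y \<Longrightarrow> \<exists>u v. u \<in> U \<and> v \<in> U \<and> f u = x \<and> f v = y \<and> E u v"
  using assms unfolding minor_map_def by blast+

lemma minor_image_pair: "minor_image U f (A, B) = (f ` (U \<inter> A), f ` (U \<inter> B))"
  by (simp add: minor_image_def)

lemma minor_image_sep:
  assumes mm: "minor_map V E VH EH U f" and sep: "is_sep V E A B"
  shows "is_sep VH EH (f ` (U \<inter> A)) (f ` (U \<inter> B))"
  unfolding is_sep_def
proof (intro conjI allI impI notI)
  show "f ` (U \<inter> A) \<union> f ` (U \<inter> B) = VH"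
    using minor_mapD(1,2)[OF mm] is_sepD(1)[OF sep] by blast
  fix x y assume xy: "x \<in> f ` (U \<inter> A) - f ` (U \<inter> B) \<and> y \<in> f ` (U \<inter> B) - f ` (U \<inter> A)" and "EH x y"
  then obtain u v where uv: "u \<in> U" "v \<in> U" "f u = x" "f v = y" "E u v"
    using minor_mapD(4)[OF mm] by blast
  moreover have "u \<notin> B" "v \<notin> A" using uv(1-4) xy by (auto intro: rev_image_eqI)
  moreover have "u \<in> V" "v \<in> V" using uv(1,2) minor_mapD(1)[OF mm] by blast+
  ultimately have "u \<in> A - B" "v \<in> B - A" using is_sepD(1)[OF sep] by blast+
  then show False using is_sepD(2)[OF sep] uv(5) by blast
qed

text \<open>A branch set is connected, so if it meets both sides of a separation it meets the separator.\<close>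
lemma minor_image_separator:
  assumes mm: "minor_map V E VH EH U f" and sep: "is_sep V E A B"
  shows "f ` (U \<inter> A) \<inter> f ` (U \<inter> B) \<subseteq> f ` (U \<inter> (A \<inter> B))"
proof
  fix x assume x: "x \<in> f ` (U \<inter> A) \<inter> f ` (U \<inter> B)"
  then obtain a where a: "a \<in> U \<inter> A" "x = f a" by blast
  obtain b where b: "b \<in> U \<inter> B" "x = f b" using x by blast
  let ?W = "{u \<in> U. f u = x}"
  have UV: "U \<subseteq> V" using minor_mapD(1)[OF mm] .
  have "x \<in> f ` U" using a by blast
  then have "x \<in> VH" unfolding minor_mapD(2)[OF mm] .
  then have "connected_in E ?W" by (rule minor_mapD(3)[OF mm])
  show "x \<in> f ` (U \<inter> (A \<inter> B))"
  proof (rule ccontr)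
    assume nx: "x \<notin> f ` (U \<inter> (A \<inter> B))"
    have avoid: "u \<notin> A \<inter> B" if u: "u \<in> ?W" for u
    proof
      assume "u \<in> A \<inter> B"
      with u have "f u \<in> f ` (U \<inter> (A \<inter> B))" by blast
      with u nx show False by simp
    qed
    have "?W \<subseteq> V" using UV by blast
    then have "?W \<subseteq> (A - B) \<union> (B - A)" using avoid is_sepD(1)[OF sep] by blast
    moreover have "a \<in> ?W" "b \<in> ?W" using a b by simp_all
    then have "a \<in> ?W \<inter> (A - B)" "b \<in> ?W \<inter> (B - A)" using a(1) b(1) avoid by blast+
    ultimately have "\<exists>u\<in>A - B. \<exists>w\<in>B - A. E u w"
      using connected_in_crossing_edge[OF \<open>connected_in E ?W\<close>, of "A - B" "B - A" a b]
      by blast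
    then show False using is_sepD(2)[OF sep] by blast
  qed
qed

lemma minor_image_order:
  assumes "graph V E" and mm: "minor_map V E VH EH U f" and sep: "is_sep V E A B"
  shows "card (f ` (U \<inter> A) \<inter> f ` (U \<inter> B)) \<le> card (A \<inter> B)"
proof -
  have "finite V" using assms(1) unfolding graph_def by blast
  then have fin: "finite U" "finite (A \<inter> B)"
    using finite_subset[OF minor_mapD(1)[OF mm]] finite_subset[OF is_sep_Int_subset[OF sep]]
    by blast+
  have "card (f ` (U \<inter> A) \<inter> f ` (U \<inter> B)) \<le> card (f ` (U \<inter> (A \<inter> B)))"
    by (rule card_mono[OF _ minor_image_separator[OF mm sep]]) (simp add: fin)
  also have "\<dots> \<le> card (U \<inter> (A \<inter> B))" by (rule card_image_le) (simp add: fin)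
  also have "\<dots> \<le> card (A \<inter> B)" by (rule card_mono[OF fin(2)]) blast
  finally show ?thesis .
qed

lemma minor_image_cover:
  assumes mm: "minor_map V E VH EH U f" and cover_V: "A1 \<union> A2 \<union> A3 = V"
    and cover_E: "\<And>u v. E u v \<Longrightarrow> u \<in> A1 \<and> v \<in> A1 \<or> u \<in> A2 \<and> v \<in> A2 \<or> u \<in> A3 \<and> v \<in> A3"
  shows "f ` (U \<inter> A1) \<union> f ` (U \<inter> A2) \<union> f ` (U \<inter> A3) = VH"
    and "EH x y \<Longrightarrow> x \<in> f ` (U \<inter> A1) \<and> y \<in> f ` (U \<inter> A1) \<or>
      x \<in> f ` (U \<inter> A2) \<and> y \<in> f ` (U \<inter> A2) \<or> x \<in> f ` (U \<inter> A3) \<and> y \<in> f ` (U \<inter> A3)"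
proof -
  have "f ` U = f ` (U \<inter> A1) \<union> f ` (U \<inter> A2) \<union> f ` (U \<inter> A3)"
    using cover_V minor_mapD(1)[OF mm] by blast
  then show "f ` (U \<inter> A1) \<union> f ` (U \<inter> A2) \<union> f ` (U \<inter> A3) = VH"
    using minor_mapD(2)[OF mm] by simp
  assume "EH x y"
  then obtain u v where uv: "u \<in> U" "v \<in> U" "f u = x" "f v = y" "E u v"
    using minor_mapD(4)[OF mm] by blast
  then show "x \<in> f ` (U \<inter> A1) \<and> y \<in> f ` (U \<inter> A1) \<or> x \<in> f ` (U \<inter> A2) \<and> y \<in> f ` (U \<inter> A2) \<or>
      x \<in> f ` (U \<inter> A3) \<and> y \<in> f ` (U \<inter> A3)"
    using cover_E[OF uv(5)] by blast
qed

lemma lift_tangle: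
  assumes g: "graph V E" and gH: "graph VH EH" and mm: "minor_map V E VH EH U f"
    and tH: "is_tangle VH EH k \<tau>H"
  shows "is_tangle V E k (lift V E U f k \<tau>H)"
  unfolding is_tangle_def
proof (intro conjI allI impI notI)
  show "\<forall>s\<in>lift V E U f k \<tau>H. is_sep V E (fst s) (snd s) \<and> sep_order s < k"
    unfolding lift_def by auto
next
  fix A B assume AB: "is_sep V E A B \<and> card (A \<inter> B) < k"
  let ?P = "f ` (U \<inter> A)" and ?Q = "f ` (U \<inter> B)"
  have PQ: "is_sep VH EH ?P ?Q" "card (?P \<inter> ?Q) < k"
    using minor_image_sep[OF mm] minor_image_order[OF g mm] AB by (blast, fastforce)
  have BA: "is_sep V E B A" "card (B \<inter> A) < k"
    using is_sep_swap[OF graph_symp[OF g]] AB by (blast, simp add: Int_commute)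
  have mem: "(A, B) \<in> lift V E U f k \<tau>H \<longleftrightarrow> (?P, ?Q) \<in> \<tau>H"
    "(B, A) \<in> lift V E U f k \<tau>H \<longleftrightarrow> (?Q, ?P) \<in> \<tau>H"
    unfolding lift_def sep_order_def using AB BA by (auto simp: minor_image_pair)
  show "(A, B) \<in> lift V E U f k \<tau>H \<or> (B, A) \<in> lift V E U f k \<tau>H"
    using tangle_orients[OF tH PQ] mem by blast
  assume "(A, B) \<in> lift V E U f k \<tau>H \<and> (B, A) \<in> lift V E U f k \<tau>H"
  then show "A = B" using tangle_asym[OF gH tH] mem by blast
next
  assume "\<exists>A1 B1 A2 B2 A3 B3. (A1, B1) \<in> lift V E U f k \<tau>H \<and> (A2, B2) \<in> lift V E U f k \<tau>H \<and>
    (A3, B3) \<in> lift V E U f k \<tau>H \<and> A1 \<union> A2 \<union> A3 = V \<and>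
    (\<forall>u v. E u v \<longrightarrow> u \<in> A1 \<and> v \<in> A1 \<or> u \<in> A2 \<and> v \<in> A2 \<or> u \<in> A3 \<and> v \<in> A3)"
  then obtain A1 B1 A2 B2 A3 B3 where
    lifted: "(A1, B1) \<in> lift V E U f k \<tau>H" "(A2, B2) \<in> lift V E U f k \<tau>H"
      "(A3, B3) \<in> lift V E U f k \<tau>H"
    and cover_V: "A1 \<union> A2 \<union> A3 = V"
    and cover_E: "\<And>u v. E u v \<Longrightarrow> u \<in> A1 \<and> v \<in> A1 \<or> u \<in> A2 \<and> v \<in> A2 \<or> u \<in> A3 \<and> v \<in> A3"
    by blast
  have "(f ` (U \<inter> A1), f ` (U \<inter> B1)) \<in> \<tau>H" "(f ` (U \<inter> A2), f ` (U \<inter> B2)) \<in> \<tau>H"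
    "(f ` (U \<inter> A3), f ` (U \<inter> B3)) \<in> \<tau>H"
    using lifted unfolding lift_def by (auto simp: minor_image_pair)
  then show False
    using tangle_no_cover[OF tH] minor_image_cover[OF mm cover_V cover_E] by blast
qed

section \<open>Standard cube-minors\<close>

definition cube_antipode :: "cube_vertex \<Rightarrow> cube_vertex" where
  "cube_antipode v = (case v of (a, b, c) \<Rightarrow> (\<not> a, \<not> b, \<not> c))"

lemma cube_B_iff: "v \<in> cube_B \<longleftrightarrow> v \<notin> cube_A"
  unfolding cube_B_def cube_V_def by simp

lemma card_cube_B: "card cube_B = 4"
proof -
  have B: "cube_B =
      {(True, False, False), (False, True, False), (False, False, True), (True, True, True)}"
    unfolding cube_B_def cube_V_def cube_A_def by auto
  show ?thesis unfolding B by simp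
qed

lemma cube_vertex_in_enum: "(v :: cube_vertex) \<in> set enum_class.enum"
  by (simp flip: UNIV_enum)

lemma cube_antipode_enum:
  "\<forall>a \<in> set (enum_class.enum :: cube_vertex list). a \<in> cube_A \<longrightarrow>
     cube_antipode a \<notin> cube_A \<and> \<not> cube_E a (cube_antipode a)"
  by code_simp

lemma cube_antipode_in_B: "a \<in> cube_A \<Longrightarrow> cube_antipode a \<in> cube_B"
  using cube_antipode_enum cube_vertex_in_enum cube_B_iff by blast

lemma cube_antipode_not_adjacent: "a \<in> cube_A \<Longrightarrow> \<not> cube_E a (cube_antipode a)"
  using cube_antipode_enum cube_vertex_in_enum by blast

lemma cube_non_neighbour_enum:
  "\<forall>a \<in> set (enum_class.enum :: cube_vertex list). \<forall>b \<in> set enum_class.enum.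
     a \<in> cube_A \<longrightarrow> b \<notin> cube_A \<longrightarrow> \<not> cube_E a b \<longrightarrow> b = cube_antipode a"
  by code_simp

lemma cube_non_neighbour_eq_antipode:
  "a \<in> cube_A \<Longrightarrow> b \<in> cube_B \<Longrightarrow> \<not> cube_E a b \<Longrightarrow> b = cube_antipode a"
  using cube_non_neighbour_enum cube_vertex_in_enum cube_B_iff by blast

lemma inj_cube_antipode: "inj cube_antipode"
  unfolding inj_def cube_antipode_def by auto

lemma cube_bipartite_enum:
  "\<forall>x \<in> set (enum_class.enum :: cube_vertex list). \<forall>y \<in> set enum_class.enum.
     cube_E x y \<longrightarrow> (x \<in> cube_A \<longleftrightarrow> y \<notin> cube_A)"
  by code_simp

lemma cube_bipartite: "cube_E x y \<Longrightarrow> x \<in> cube_A \<longleftrightarrow> y \<in> cube_B"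
  using cube_bipartite_enum cube_vertex_in_enum cube_B_iff by blast

lemma std_cube_minorE:
  assumes "std_cube_minor V E X U f"
  obtains g where "minor_map V E cube_V cube_E U f" and "bij_betw g cube_B X"
    and "\<And>b. b \<in> cube_B \<Longrightarrow> {u \<in> U. f u = b} = {g b}"
    and "\<And>a. a \<in> cube_A \<Longrightarrow> is_component V E X {u \<in> U. f u = a}"
    and "\<And>a. a \<in> cube_A \<Longrightarrow> nbhd V E {u \<in> U. f u = a} = X - {g (cube_antipode a)}"
proof -
  obtain g where mm: "minor_map V E cube_V cube_E U f" and bij: "bij_betw g cube_B X"
    and B: "\<forall>b\<in>cube_B. {u \<in> U. f u = b} = {g b}"
    and A: "\<forall>a\<in>cube_A. \<forall>b\<in>cube_B. \<not> cube_E a b \<longrightarrow>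
       is_component V E X {u \<in> U. f u = a} \<and> nbhd V E {u \<in> U. f u = a} = X - {g b}"
    using assms unfolding std_cube_minor_def by blast
  show ?thesis
  proof (rule that[OF mm bij])
    show "{u \<in> U. f u = b} = {g b}" if "b \<in> cube_B" for b using B that by blast
    fix a assume "a \<in> cube_A"
    then have "is_component V E X {u \<in> U. f u = a} \<and>
        nbhd V E {u \<in> U. f u = a} = X - {g (cube_antipode a)}"
      using A cube_antipode_in_B cube_antipode_not_adjacent by blast
    then show "is_component V E X {u \<in> U. f u = a}"
      and "nbhd V E {u \<in> U. f u = a} = X - {g (cube_antipode a)}" by blast+
  qed
qed

lemma std_cube_minor_nbhd_inj:
  assumes std: "std_cube_minor V E X U f" and "a \<in> cube_A" and "a' \<in> cube_A"
    and "nbhd V E {u \<in> U. f u = a} = nbhd V E {u \<in> U. f u = a'}"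
  shows "a = a'"
proof -
  obtain h where bij: "bij_betw h cube_B X"
    and nbhd: "\<And>a. a \<in> cube_A \<Longrightarrow> nbhd V E {u \<in> U. f u = a} = X - {h (cube_antipode a)}"
    by (rule std_cube_minorE[OF std]) blast
  have "h (cube_antipode a) \<in> X" "h (cube_antipode a') \<in> X"
    using bij cube_antipode_in_B assms(2,3) unfolding bij_betw_def by blast+
  then have "h (cube_antipode a) = h (cube_antipode a')"
    using assms(4) nbhd[OF assms(2)] nbhd[OF assms(3)] by blast
  then have "cube_antipode a = cube_antipode a'"
    using inj_onD[OF bij_betw_imp_inj_on[OF bij]] cube_antipode_in_B assms(2,3) by blast
  then show ?thesis using inj_cube_antipode by (rule injD[rotated])
qed

text \<open>The branch set of a cube vertex on the strict small side lies in A - B; it is not a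
  single vertex of X \<subseteq> B, so it is a component whose three neighbours lie in the separator.\<close>
lemma std_cube_minor_strict_side:
  assumes g: "graph V E" and std: "std_cube_minor V E X U f" and sep: "is_sep V E A B"
    and ord: "card (A \<inter> B) = 3" and XB: "X \<subseteq> B" and x: "x \<in> f ` (U \<inter> A) - f ` (U \<inter> B)"
  shows "x \<in> cube_A" and "A \<inter> B = nbhd V E {u \<in> U. f u = x}"
proof -
  obtain h where mm: "minor_map V E cube_V cube_E U f" and bij: "bij_betw h cube_B X"
    and branch_B: "\<And>b. b \<in> cube_B \<Longrightarrow> {u \<in> U. f u = b} = {h b}"
    and comp: "\<And>a. a \<in> cube_A \<Longrightarrow> is_component V E X {u \<in> U. f u = a}"
    and nbhd: "\<And>a. a \<in> cube_A \<Longrightarrow> nbhd V E {u \<in> U. f u = a} = X - {h (cube_antipode a)}"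
    by (rule std_cube_minorE[OF std]) blast
  have h_in: "h b \<in> X" if "b \<in> cube_B" for b using bij that unfolding bij_betw_def by blast
  let ?C = "{u \<in> U. f u = x}"
  have CAB: "?C \<subseteq> A - B"
  proof
    fix u assume u: "u \<in> ?C"
    then have "u \<notin> B" using x by blast
    moreover have "u \<in> V" using u minor_mapD(1)[OF mm] by blast
    ultimately show "u \<in> A - B" using is_sepD(1)[OF sep] by blast
  qed
  show xA: "x \<in> cube_A"
  proof (rule ccontr)
    assume "x \<notin> cube_A"
    then have "x \<in> cube_B" by (simp add: cube_B_iff)
    then have "h x \<in> ?C \<inter> B" using branch_B h_in XB by blast
    then show False using CAB by blast
  qed
  have sub: "nbhd V E ?C \<subseteq> A \<inter> B"
    using nbhd_subset_small_side[OF sep CAB] nbhd_component_subset[OF g comp[OF xA]] XB by blast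
  have "card X = 4" using bij_betw_same_card[OF bij] card_cube_B by simp
  then have "card (nbhd V E ?C) = card (A \<inter> B)"
    using h_in[OF cube_antipode_in_B[OF xA]] nbhd[OF xA] ord by (simp add: card_Diff_singleton)
  moreover have "finite (A \<inter> B)" using ord by (intro card_ge_0_finite) simp
  ultimately show "A \<inter> B = nbhd V E ?C"
    using card_subset_eq[OF _ sub] by simp
qed

lemma std_cube_minor_image_in_cube_tangle:
  assumes g: "graph V E" and std: "std_cube_minor V E X U f" and sep: "is_sep V E A B"
    and ord: "card (A \<inter> B) = 3" and XB: "X \<subseteq> B"
  shows "minor_image U f (A, B) \<in> cube_tangle"
proof -
  have mm: "minor_map V E cube_V cube_E U f" using std unfolding std_cube_minor_def by blast
  have "card (f ` (U \<inter> A) - f ` (U \<inter> B)) \<le> Suc 0"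
  proof (subst card_le_Suc0_iff_eq, simp, intro ballI)
    fix x y assume x: "x \<in> f ` (U \<inter> A) - f ` (U \<inter> B)" and y: "y \<in> f ` (U \<inter> A) - f ` (U \<inter> B)"
    show "x = y"
    proof (rule std_cube_minor_nbhd_inj[OF std])
      show "x \<in> cube_A" "y \<in> cube_A" using std_cube_minor_strict_side(1)[OF assms] x y by blast+
      show "nbhd V E {u \<in> U. f u = x} = nbhd V E {u \<in> U. f u = y}"
        using std_cube_minor_strict_side(2)[OF assms x] std_cube_minor_strict_side(2)[OF assms y]
        by simp
    qed
  qed
  then show ?thesis
    unfolding cube_tangle_def minor_image_pair
    using minor_image_sep[OF mm sep] minor_image_order[OF g mm sep] ord by simp
qed

locale cube_model =
  fixes V :: "'a set" and E :: "'a \<Rightarrow> 'a \<Rightarrow> bool" and X :: "'a set"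
    and h :: "cube_vertex \<Rightarrow> 'a" and K :: "cube_vertex \<Rightarrow> 'a set"
  assumes graph: "graph V E" and X_subset: "X \<subseteq> V" and bij: "bij_betw h cube_B X"
    and comp: "\<And>a. a \<in> cube_A \<Longrightarrow> is_component V E X (K a)"
    and nbhd_K: "\<And>a. a \<in> cube_A \<Longrightarrow> nbhd V E (K a) = X - {h (cube_antipode a)}"
begin

definition U :: "'a set" where
  "U = X \<union> \<Union>(K ` cube_A)"

definition f :: "'a \<Rightarrow> cube_vertex" where
  "f u = (if u \<in> X then inv_into cube_B h u else (SOME a. a \<in> cube_A \<and> u \<in> K a))"

lemma h_in: "b \<in> cube_B \<Longrightarrow> h b \<in> X"
  using bij unfolding bij_betw_def by blast

lemma h_antipode_eq:
  "a \<in> cube_A \<Longrightarrow> a' \<in> cube_A \<Longrightarrow> h (cube_antipode a) = h (cube_antipode a') \<Longrightarrow> a = a'"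
  using inj_onD[OF bij_betw_imp_inj_on[OF bij]] cube_antipode_in_B injD[OF inj_cube_antipode]
  by metis

lemma K_outside: "a \<in> cube_A \<Longrightarrow> K a \<subseteq> V - X"
  using comp unfolding is_component_def by blast

lemma K_disjoint:
  assumes "a \<in> cube_A" and "a' \<in> cube_A" and "u \<in> K a" and "u \<in> K a'"
  shows "a = a'"
proof -
  have "K a = K a'"
    using components_eq[OF graph comp[OF assms(1)] comp[OF assms(2)]] assms(3,4) by blast
  then have "X - {h (cube_antipode a)} = X - {h (cube_antipode a')}"
    using nbhd_K[OF assms(1)] nbhd_K[OF assms(2)] by simp
  then have "h (cube_antipode a) = h (cube_antipode a')"
    using h_in[OF cube_antipode_in_B[OF assms(1)]] h_in[OF cube_antipode_in_B[OF assms(2)]] by blast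
  then show ?thesis using h_antipode_eq assms(1,2) by blast
qed

lemma f_K:
  assumes "a \<in> cube_A" and "u \<in> K a"
  shows "f u = a"
proof -
  have "u \<notin> X" using K_outside assms by blast
  moreover have "(SOME a. a \<in> cube_A \<and> u \<in> K a) = a"
    using someI[of "\<lambda>a. a \<in> cube_A \<and> u \<in> K a" a] K_disjoint assms by blast
  ultimately show ?thesis unfolding f_def by simp
qed

lemma f_h: "b \<in> cube_B \<Longrightarrow> f (h b) = b"
  using h_in inv_into_f_f[OF bij_betw_imp_inj_on[OF bij]] unfolding f_def by simp

lemma U_cases:
  assumes "u \<in> U"
  obtains (bag) b where "b \<in> cube_B" and "u = h b" | (comp) a where "a \<in> cube_A" and "u \<in> K a"
  using assms bij unfolding U_def bij_betw_def by blast

lemma branch_B: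
  assumes b: "b \<in> cube_B"
  shows "{u \<in> U. f u = b} = {h b}"
proof
  show "{h b} \<subseteq> {u \<in> U. f u = b}" using f_h[OF b] h_in[OF b] unfolding U_def by blast
  show "{u \<in> U. f u = b} \<subseteq> {h b}"
  proof
    fix u assume u: "u \<in> {u \<in> U. f u = b}"
    then have "u \<in> U" by blast
    then show "u \<in> {h b}"
    proof (cases rule: U_cases)
      case (bag b')
      then show ?thesis using u f_h by auto
    next
      case (comp a)
      then show ?thesis using u f_K b cube_B_iff by auto
    qed
  qed
qed

lemma branch_A:
  assumes a: "a \<in> cube_A"
  shows "{u \<in> U. f u = a} = K a"
proof
  show "K a \<subseteq> {u \<in> U. f u = a}" using f_K[OF a] a unfolding U_def by blast
  show "{u \<in> U. f u = a} \<subseteq> K a"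
  proof
    fix u assume u: "u \<in> {u \<in> U. f u = a}"
    then have "u \<in> U" by blast
    then show "u \<in> K a"
    proof (cases rule: U_cases)
      case (bag b)
      then show ?thesis using u f_h a cube_B_iff by auto
    next
      case (comp a')
      then show ?thesis using u f_K by auto
    qed
  qed
qed

lemma edge_K_h:
  assumes "a \<in> cube_A" and "b \<in> cube_B" and "cube_E a b"
  shows "\<exists>u\<in>K a. E u (h b)"
proof -
  have "b \<noteq> cube_antipode a" using cube_antipode_not_adjacent assms by blast
  then have "h b \<noteq> h (cube_antipode a)"
    using inj_onD[OF bij_betw_imp_inj_on[OF bij]] cube_antipode_in_B assms(1,2) by blast
  then have "h b \<in> nbhd V E (K a)" using nbhd_K[OF assms(1)] h_in[OF assms(2)] by blast
  then show ?thesis unfolding nbhd_def by blast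
qed

lemma f_image: "f ` U = cube_V"
proof -
  have "v \<in> f ` U" for v
  proof (cases "v \<in> cube_A")
    case True
    then obtain u where "u \<in> K v" using comp unfolding is_component_def connected_in_def by blast
    then have "u \<in> U \<and> f u = v" using branch_A[OF True] by blast
    then show ?thesis by force
  next
    case False
    then have "h v \<in> U \<and> f (h v) = v" using branch_B cube_B_iff by blast
    then show ?thesis by force
  qed
  then show ?thesis unfolding cube_V_def by blast
qed

lemma edge_witness: "cube_E x y \<Longrightarrow> \<exists>u v. u \<in> U \<and> v \<in> U \<and> f u = x \<and> f v = y \<and> E u v"
proof -
  assume "cube_E x y"
  then consider "x \<in> cube_A" "y \<in> cube_B" "cube_E x y" | "y \<in> cube_A" "x \<in> cube_B" "cube_E y x"
    using cube_bipartite sympD[OF graph_symp[OF cube_graph]] cube_B_iff by metis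
  then show ?thesis
  proof cases
    case 1
    then obtain u where "u \<in> K x" "E u (h y)" using edge_K_h by blast
    then show ?thesis using branch_A[OF 1(1)] branch_B[OF 1(2)] by blast
  next
    case 2
    then obtain u where "u \<in> K y" "E u (h x)" using edge_K_h by blast
    then show ?thesis
      using branch_A[OF 2(1)] branch_B[OF 2(2)] sympD[OF graph_symp[OF graph]] by blast
  qed
qed

lemma std_cube_minor: "std_cube_minor V E X U f"
proof -
  have "minor_map V E cube_V cube_E U f"
    unfolding minor_map_def
  proof (intro conjI allI impI ballI f_image edge_witness)
    show "U \<subseteq> V" unfolding U_def using X_subset K_outside by blast
    show "connected_in E {u \<in> U. f u = x}" for x
      using branch_A comp branch_B connected_in_singleton cube_B_iff
      unfolding is_component_def by (cases "x \<in> cube_A") auto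
  qed
  moreover have "is_component V E X {u \<in> U. f u = a} \<and> nbhd V E {u \<in> U. f u = a} = X - {h b}"
    if "a \<in> cube_A" "b \<in> cube_B" "\<not> cube_E a b" for a b
    using cube_non_neighbour_eq_antipode[OF that] branch_A comp nbhd_K that(1) by simp
  ultimately show ?thesis
    unfolding std_cube_minor_def using bij branch_B by blast
qed

end

lemma cubic_has_std_cube_minor:
  assumes g: "graph V E" and cub: "cubic V E X"
  shows "\<exists>U f. std_cube_minor V E X U f"
proof -
  have XV: "X \<subseteq> V" and X4: "card X = 4"
    and nbhds: "{nbhd V E C | C. is_component V E X C} = {S. S \<subseteq> X \<and> card S = 3}"
    using cub unfolding cubic_def by blast+
  have finX: "finite X" using X4 by (intro card_ge_0_finite) simp
  have "\<exists>h. bij_betw h cube_B X"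
    by (rule finite_same_card_bij) (simp_all add: finX card_cube_B X4)
  then obtain h where bij: "bij_betw h cube_B X" by blast
  have "\<forall>a\<in>cube_A. \<exists>C. is_component V E X C \<and> nbhd V E C = X - {h (cube_antipode a)}"
  proof
    fix a assume "a \<in> cube_A"
    then have "h (cube_antipode a) \<in> X"
      using bij cube_antipode_in_B unfolding bij_betw_def by blast
    then have "card (X - {h (cube_antipode a)}) = 3"
      using X4 finX by (simp add: card_Diff_singleton)
    then have "X - {h (cube_antipode a)} \<in> {nbhd V E C | C. is_component V E X C}"
      unfolding nbhds by blast
    then show "\<exists>C. is_component V E X C \<and> nbhd V E C = X - {h (cube_antipode a)}" by blast
  qed
  then have "\<exists>K. \<forall>a\<in>cube_A. is_component V E X (K a) \<and> nbhd V E (K a) = X - {h (cube_antipode a)}"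
    by (rule bchoice)
  then obtain K
    where K: "\<forall>a\<in>cube_A. is_component V E X (K a) \<and> nbhd V E (K a) = X - {h (cube_antipode a)}"
    by blast
  have "cube_model V E X h K"
    using g XV bij K by unfold_locales blast+
  then show ?thesis using cube_model.std_cube_minor by blast
qed

context star_of_3_separations
begin

lemma sigma_subset_lift:
  assumes "std_cube_minor V E X U f"
  shows "\<sigma> \<subseteq> lift V E U f 4 cube_tangle"
proof
  fix s assume "s \<in> \<sigma>"
  moreover obtain A B where s: "s = (A, B)" by (cases s)
  ultimately have AB: "(A, B) \<in> \<sigma>" by simp
  have "minor_image U f (A, B) \<in> cube_tangle"
    by (rule std_cube_minor_image_in_cube_tangle[OF graph assms sigma_sep[OF AB] sigma_order[OF AB]
          bag_subset_big_side[OF AB]])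
  then show "s \<in> lift V E U f 4 cube_tangle"
    unfolding lift_def sep_order_def s using sigma_sep[OF AB] sigma_order[OF AB] by simp
qed

lemma cubic_bag_tangle:
  assumes "cubic V E X"
  shows "\<exists>\<tau>. is_tangle V E 4 \<tau> \<and> \<sigma> \<subseteq> \<tau>"
proof -
  obtain U f where std: "std_cube_minor V E X U f"
    using cubic_has_std_cube_minor[OF graph assms] by blast
  then have "minor_map V E cube_V cube_E U f" unfolding std_cube_minor_def by blast
  then have "is_tangle V E 4 (lift V E U f 4 cube_tangle)"
    by (rule lift_tangle[OF graph cube_graph _ cube_tangle_is_tangle])
  then show ?thesis using sigma_subset_lift[OF std] by blast
qed

end

theorem mainTheorem4:
  fixes V :: "'a set" and E :: "'a \<Rightarrow> 'a \<Rightarrow> bool" and \<sigma> :: "('a set \<times> 'a set) set"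
  assumes "graph V E"
    and "k_connected 3 V E"
    and "\<forall>s\<in>\<sigma>. is_sep V E (fst s) (snd s) \<and> sep_order s = 3"
    and "is_star \<sigma>"
    and "card (bag V \<sigma>) = 4"
  shows "((\<exists>\<tau>. is_tangle V E 4 \<tau> \<and> \<sigma> \<subseteq> \<tau>) \<longleftrightarrow> cubic V E (bag V \<sigma>)) \<and>
         (cubic V E (bag V \<sigma>) \<longleftrightarrow>
            cubic V E (bag V \<sigma>) \<and>
            (\<forall>U f. std_cube_minor V E (bag V \<sigma>) U f \<longrightarrow>
               \<sigma> \<subseteq> lift V E U f 4 (THE \<tau>. is_tangle cube_V cube_E 4 \<tau>)))"
proof -
  interpret star_of_3_separations V E \<sigma>
    using assms(1,3,4) by unfold_locales
  have "(\<exists>\<tau>. is_tangle V E 4 \<tau> \<and> \<sigma> \<subseteq> \<tau>) \<Longrightarrow> cubic V E X"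
    using tangle_bag_cubic[OF assms(2,5)] by blast
  moreover have "cubic V E X \<Longrightarrow> \<exists>\<tau>. is_tangle V E 4 \<tau> \<and> \<sigma> \<subseteq> \<tau>"
    by (rule cubic_bag_tangle)
  moreover have "\<sigma> \<subseteq> lift V E U f 4 (THE \<tau>. is_tangle cube_V cube_E 4 \<tau>)"
    if "std_cube_minor V E X U f" for U f
    unfolding The_cube_tangle using sigma_subset_lift[OF that] .
  ultimately show ?thesis by blast
qed

end
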